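(* Fix $n\ge-1$. For every $m\ge1$ and every $m$-generator $x=\langle i_0,\dots,i_m\rangle$ of $\mathcal O_n$ (with $0\le i_0<\cdots<i_m\le n$), writing $x\delta^j_m=\langle i_0,\dots,\widehat{i_j},\dots,i_m\rangle$ for the $(m-1)$-generator obtained by deleting $i_j$, we have in $\lambda(\mathcal O_n)_{m-1}$: $$[s(x)]=\sum_{\substack{0\le j\le m\\ j\text{ odd}}}[x\delta^j_m],\qquad [t(x)]=\sum_{\substack{0\le j\le m\\ j\text{ even}}}[x\delta^j_m].$$
   Context: All $\omega$-categories are strict and globular; for an $m$-cell $x$, $s(x),t(x)$ are its source and target, $s_i,t_i$ iterated ones. An expansion on an $\omega$-category $C$ consists of a $0$-cell $o$ and, for each $k$-cell $x$, a $(k+1)$-cell $\xi_x$ with $\xi_x:o\to x$ if $k=0$ and $\xi_x:\xi_{t(x)}\to x\star_0\xi_{s_0(x)}\star_1\cdots\star_{k-1}\xi_{s_{k-1}(x)}$ if $k>0$ ($\star_p$ the $p$-composition, lower-dimensional cells standing for iterated identities, composites bracketed giving priority to the lowest-dimensional composition), satisfying $\xi_{y\star_p x}=t_{p+1}(y)\star_0\xi_{s_0(x)}\star_1\cdots\star_{p-1}\xi_{s_{p-1}(x)}\star_p\xi_x\star_{p+1}\xi_y$, $\xi_{1_u}=1_{\xi_u}$, $\xi_{\xi_u}=1_{\xi_u}$, $\xi_o=1_o$. $T=UF$ is the monad on $\omega\mathbf{Cat}$ induced by the forgetful functor $U$ from $\omega$-categories with expansion (morphisms preserving $o$ and $\xi$)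 and its left adjoint $F$, with unit $\eta$. $\mathcal O_k=T^{k+1}(\emptyset)$ for $k\ge-1$ ($\mathcal O_{-1}=\emptyset$); $o_k$ and $\xi$ are the origin and expansion of $\mathcal O_k$ ($k\ge0$); $\eta^i:\mathcal O_k\to\mathcal O_{k+i}$ is the composite of units. For $0\le i_0\le\cdots\le i_m\le n$ the cell $\langle i_0,\dots,i_m\rangle$ of $\mathcal O_n$ is defined inductively by $\langle i\rangle=\eta^i(o_{n-i})$ and $\langle i_0,\dots,i_m\rangle=\eta^{i_0}(\xi_{\langle i_1-i_0,\dots,i_m-i_0\rangle})$ (inner cell in $\mathcal O_{n-i_0}$, $\xi$ the expansion of $\mathcal O_{n-i_0}$); the cells with $i_0<\cdots<i_m$ are exactly the $m$-generators of the polygraph freely generating $\mathcal O_n$, so they correspond to injective order-preserving maps $[m]\to[n]$, and $x\delta^j_m$ corresponds to precomposition with the coface $\delta^j_m:[m-1]\to[m]$ missing $j$. For an $\omega$-category $C$, $\lambda(C)_k$ is the free abelian group on $k$-cells of $C$ modulo the subgroup generated by $x\star_j y-x-y$ ($0\le j<k$, composite defined); $[x]$ denotes the class of $x$ (identity cells have class $0$). *)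

theory Defs
  imports Main "HOL-Library.Poly_Mapping"
begin

text \<open>
  Cells of O_k = T^(k+1)(empty) are represented by raw terms modulo an inductively
  generated equivalence.  A term at level k is built from
    Ori            the origin o_k of O_k,
    Xi t           the expansion cell xi_t of the cell t,
    Idc t          the identity 1_t,
    Comp p a b     the p-composite a *_p b  (a after b, i.e. s_p a = t_p b),
    Eta t          the image under the unit eta : O_(k-1) -> O_k of a cell t of O_(k-1).
  Level 0 (O_0 = T(empty)) has no Eta terms since O_(-1) is empty.
\<close>

datatype rt = Ori | Xi rt | Idc rt | Comp nat rt rt | Eta rt

fun dim :: "rt \<Rightarrow> nat" where
  "dim Ori = 0"
| "dim (Xi t) = Suc (dim t)"
| "dim (Idc t) = Suc (dim t)"
| "dim (Comp p a b) = dim a"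
| "dim (Eta t) = dim t"

text \<open>Padding a cell with iterated identities up to dimension d
  (lower-dimensional cells stand for iterated identities).\<close>
definition pad :: "nat \<Rightarrow> rt \<Rightarrow> rt" where
  "pad d t = (Idc ^^ (d - dim t)) t"

definition cmp :: "nat \<Rightarrow> rt \<Rightarrow> rt \<Rightarrow> rt" where
  "cmp p a b = Comp p (pad (max (dim a) (dim b)) a) (pad (max (dim a) (dim b)) b)"

text \<open>Left-nested composite  acc *_(j0) f j0 *_(j0+1) ... (priority to the lowest
  composition), over the list of indices js.\<close>
definition chain :: "(nat \<Rightarrow> rt) \<Rightarrow> rt \<Rightarrow> nat list \<Rightarrow> rt" where
  "chain f acc js = foldl (\<lambda>a j. cmp j a (f j)) acc js"

text \<open>Iterated boundaries: bd i False x = s_i(x), bd i True x = t_i(x)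
  (and x itself if i >= dim x).  For the expansion:
  s_0(xi_x) = o, s_i(xi_x) = xi_(t_(i-1) x) for i >= 1, and
  t_i(xi_x) = t_i(x) *_0 xi_(s_0 x) *_1 ... *_(i-1) xi_(s_(i-1) x).\<close>
fun bd :: "nat \<Rightarrow> bool \<Rightarrow> rt \<Rightarrow> rt" where
  "bd i e Ori = Ori"
| "bd i e (Idc t) = (if dim t < i then Idc t else bd i e t)"
| "bd i e (Eta t) = Eta (bd i e t)"
| "bd i e (Comp p a b) =
     (if dim a \<le> i then Comp p a b
      else if i \<le> p then (if e then bd i e a else bd i e b)
      else Comp p (bd i e a) (bd i e b))"
| "bd i e (Xi x) =
     (if dim x < i then Xi x
      else if e then chain (\<lambda>j. Xi (bd j False x)) (bd i True x) [0..<i]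
      else if i = 0 then Ori else Xi (bd (i - 1) True x))"

definition src :: "rt \<Rightarrow> rt" where "src x = bd (dim x - 1) False x"
definition tgt :: "rt \<Rightarrow> rt" where "tgt x = bd (dim x - 1) True x"

text \<open>Right-hand side of the expansion axiom for composites:
  xi_(y *_p x) = t_(p+1)(y) *_0 xi_(s_0 x) *_1 ... *_(p-1) xi_(s_(p-1) x) *_p xi_x *_(p+1) xi_y.\<close>
definition xiComp :: "nat \<Rightarrow> rt \<Rightarrow> rt \<Rightarrow> rt" where
  "xiComp p y x =
     cmp (Suc p) (cmp p (chain (\<lambda>j. Xi (bd j False x)) (bd (Suc p) True y) [0..<p]) (Xi x)) (Xi y)"

text \<open>Well-formed cells of O_k (wf k t) and equality of cells of O_k (eqv k t u):
  the free omega-category with expansion generated by the omega-category O_(k-1)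
  (the unit Eta being an omega-functor), O_(-1) being empty.\<close>
inductive wf :: "nat \<Rightarrow> rt \<Rightarrow> bool" and eqv :: "nat \<Rightarrow> rt \<Rightarrow> rt \<Rightarrow> bool" where
  wf_Ori: "wf k Ori"
| wf_Xi: "wf k t \<Longrightarrow> wf k (Xi t)"
| wf_Idc: "wf k t \<Longrightarrow> wf k (Idc t)"
| wf_Eta: "wf k t \<Longrightarrow> wf (Suc k) (Eta t)"
| wf_Comp: "\<lbrakk>wf k a; wf k b; dim a = dim b; p < dim a; eqv k (bd p False a) (bd p True b)\<rbrakk>
            \<Longrightarrow> wf k (Comp p a b)"
| wf_bd: "wf k t \<Longrightarrow> wf k (bd i e t)"
| wf_eqvL: "eqv k t u \<Longrightarrow> wf k t"
| wf_eqvR: "eqv k t u \<Longrightarrow> wf k u"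
| eqv_refl: "wf k t \<Longrightarrow> eqv k t t"
| eqv_sym: "eqv k t u \<Longrightarrow> eqv k u t"
| eqv_trans: "\<lbrakk>eqv k t u; eqv k u v\<rbrakk> \<Longrightarrow> eqv k t v"
| eqv_Xi: "eqv k t u \<Longrightarrow> eqv k (Xi t) (Xi u)"
| eqv_Idc: "eqv k t u \<Longrightarrow> eqv k (Idc t) (Idc u)"
| eqv_Eta: "eqv k t u \<Longrightarrow> eqv (Suc k) (Eta t) (Eta u)"
| eqv_Comp: "\<lbrakk>eqv k a a'; eqv k b b'; wf k (Comp p a b)\<rbrakk> \<Longrightarrow> eqv k (Comp p a b) (Comp p a' b')"
| eqv_bd: "eqv k t u \<Longrightarrow> eqv k (bd i e t) (bd i e u)"
| eqv_assoc: "wf k (Comp p (Comp p c b) a) \<Longrightarrow> eqv k (Comp p (Comp p c b) a) (Comp p c (Comp p b a))"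
| eqv_unitL: "\<lbrakk>wf k a; p < dim a\<rbrakk> \<Longrightarrow> eqv k (Comp p (pad (dim a) (bd p True a)) a) a"
| eqv_unitR: "\<lbrakk>wf k a; p < dim a\<rbrakk> \<Longrightarrow> eqv k (Comp p a (pad (dim a) (bd p False a))) a"
| eqv_interchange: "\<lbrakk>p < q; wf k (Comp p (Comp q d c) (Comp q b a))\<rbrakk>
      \<Longrightarrow> eqv k (Comp p (Comp q d c) (Comp q b a)) (Comp q (Comp p d b) (Comp p c a))"
| eqv_id_comp: "wf k (Comp p a b) \<Longrightarrow> eqv k (Idc (Comp p a b)) (Comp p (Idc a) (Idc b))"
| eqv_Eta_Comp: "wf k (Comp p a b) \<Longrightarrow> eqv (Suc k) (Eta (Comp p a b)) (Comp p (Eta a) (Eta b))"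
| eqv_Eta_Idc: "wf k a \<Longrightarrow> eqv (Suc k) (Eta (Idc a)) (Idc (Eta a))"
| eqv_Xi_Comp: "wf k (Comp p y x) \<Longrightarrow> eqv k (Xi (Comp p y x)) (xiComp p y x)"
| eqv_Xi_Idc: "wf k u \<Longrightarrow> eqv k (Xi (Idc u)) (Idc (Xi u))"
| eqv_Xi_Xi: "wf k u \<Longrightarrow> eqv k (Xi (Xi u)) (Idc (Xi u))"
| eqv_Xi_Ori: "eqv k (Xi Ori) (Idc Ori)"

text \<open>brk [i_0,...,i_m] is the cell \<langle>i_0,...,i_m\<rangle> of O_n (for any n >= i_m):
  \<langle>i\<rangle> = eta^i(o), \<langle>i_0,...,i_m\<rangle> = eta^(i_0)(xi_(\<langle>i_1-i_0,...,i_m-i_0\<rangle>)).\<close>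
fun brk :: "nat list \<Rightarrow> rt" where
  "brk [] = Ori"
| "brk [i] = (Eta ^^ i) Ori"
| "brk (i # j # r) = (Eta ^^ i) (Xi (brk (map (\<lambda>a. a - i) (j # r))))"

definition face :: "nat \<Rightarrow> nat list \<Rightarrow> nat list" where
  "face j xs = take j xs @ drop (Suc j) xs"

text \<open>Formal integer combinations of raw terms; lam_rel k d is the subgroup generated by
  [t]-[u] for equal d-cells t,u of O_k (so that formal sums of d-cells modulo it form the
  free abelian group on the d-cells) and x *_j y - x - y for composable d-cells, j < d.\<close>
inductive_set lam_rel :: "nat \<Rightarrow> nat \<Rightarrow> (rt \<Rightarrow>\<^sub>0 int) set" for k d where
  lr_eqv: "\<lbrakk>eqv k t u; dim t = d\<rbrakk> \<Longrightarrow> Poly_Mapping.single t 1 - Poly_Mapping.single u 1 \<in> lam_rel k d"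
| lr_comp: "\<lbrakk>wf k (Comp j a b); dim a = d; j < d\<rbrakk> \<Longrightarrow>
     Poly_Mapping.single (Comp j a b) 1 - Poly_Mapping.single a 1 - Poly_Mapping.single b 1 \<in> lam_rel k d"
| lr_zero: "0 \<in> lam_rel k d"
| lr_add: "\<lbrakk>f \<in> lam_rel k d; g \<in> lam_rel k d\<rbrakk> \<Longrightarrow> f + g \<in> lam_rel k d"
| lr_neg: "f \<in> lam_rel k d \<Longrightarrow> - f \<in> lam_rel k d"

definition lam_eq :: "nat \<Rightarrow> nat \<Rightarrow> (rt \<Rightarrow>\<^sub>0 int) \<Rightarrow> (rt \<Rightarrow>\<^sub>0 int) \<Rightarrow> bool" where
  "lam_eq k d f g \<longleftrightarrow> f - g \<in> lam_rel k d"

definition cls :: "rt \<Rightarrow> (rt \<Rightarrow>\<^sub>0 int)" where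
  "cls t = Poly_Mapping.single t 1"

end

theory Submission
  imports Defs
begin

text \<open>Write \<open>x = \<langle>i\<^sub>0,\<dots>,i\<^sub>m\<rangle> = \<eta>\<^bsup>i\<^sub>0\<^esup>(\<xi>\<^sub>y)\<close> with
  \<open>y = \<langle>i\<^sub>1-i\<^sub>0,\<dots>,i\<^sub>m-i\<^sub>0\<rangle>\<close>. Then \<open>s(\<xi>\<^sub>y) = \<xi>\<^bsub>t(y)\<^esub>\<close> and
  \<open>t(\<xi>\<^sub>y) = y \<star>\<^sub>0 \<xi>\<^bsub>s\<^sub>0 y\<^esub> \<star>\<^sub>1 \<cdots> \<star>\<^bsub>m-2\<^esub> \<xi>\<^bsub>s\<^bsub>m-2\<^esub> y\<^esub>\<close>,
  whose class is \<open>[y] + [\<xi>\<^bsub>s(y)\<^esub>]\<close> because the other factors are degenerate.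
  Both \<open>\<eta>\<close> and \<open>\<xi>\<close> respect the relations defining \<open>\<lambda>\<close>; for \<open>\<xi>\<close> this means
  \<open>[\<xi>\<^bsub>a \<star>\<^sub>j b\<^esub>] = [\<xi>\<^sub>a] + [\<xi>\<^sub>b]\<close>, read off from the expansion axiom for composites.
  As the faces of x are \<open>x\<delta>\<^sup>0 = \<eta>\<^bsup>i\<^sub>0\<^esup>(y)\<close> and
  \<open>x\<delta>\<^bsup>j+1\<^esup> = \<eta>\<^bsup>i\<^sub>0\<^esup>(\<xi>\<^bsub>y\<delta>\<^sup>j\<^esub>)\<close>, induction on m transports the formulas
  from y to x, with odd and even positions exchanged.\<close>

section \<open>Dimensions and boundaries of raw terms\<close>

lemma dim_Idc_funpow [simp]: "dim ((Idc ^^ r) t) = dim t + r"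
  by (induction r) auto

lemma dim_Eta_funpow [simp]: "dim ((Eta ^^ r) t) = dim t"
  by (induction r) auto

lemma dim_pad [simp]: "dim (pad d t) = max d (dim t)"
  unfolding pad_def by simp

lemma pad_eq_self: "d \<le> dim t \<Longrightarrow> pad d t = t"
  unfolding pad_def by simp

lemma dim_cmp [simp]: "dim (cmp p a b) = max (dim a) (dim b)"
  unfolding cmp_def by simp

lemma bd_eq_self: "dim t \<le> i \<Longrightarrow> bd i e t = t"
  by (induction t) auto

lemma bd_Eta_funpow: "bd i e ((Eta ^^ r) t) = (Eta ^^ r) (bd i e t)"
  by (induction r) auto

lemma chain_Nil [simp]: "chain f a [] = a"
  unfolding chain_def by simp

lemma chain_snoc [simp]: "chain f a (js @ [j]) = cmp j (chain f a js) (f j)"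
  unfolding chain_def by simp

lemma dim_chain: "\<forall>p\<in>set js. dim (f p) \<le> dim a \<Longrightarrow> dim (chain f a js) = dim a"
  by (induction js rule: rev_induct) auto

fun well_dim :: "rt \<Rightarrow> bool" where
  "well_dim Ori = True"
| "well_dim (Xi t) = well_dim t"
| "well_dim (Idc t) = well_dim t"
| "well_dim (Eta t) = well_dim t"
| "well_dim (Comp p a b) = (well_dim a \<and> well_dim b \<and> dim a = dim b \<and> p < dim a)"

lemma well_dim_Idc_funpow [simp]: "well_dim ((Idc ^^ r) t) = well_dim t"
  by (induction r) auto

lemma well_dim_pad [simp]: "well_dim (pad d t) = well_dim t"
  unfolding pad_def by simp

lemma well_dim_cmp [simp]: "well_dim (cmp p a b) = (well_dim a \<and> well_dim b \<and> p < max (dim a) (dim b))"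
  unfolding cmp_def by simp

lemma well_dim_chain:
  "well_dim a \<Longrightarrow> \<forall>p\<in>set js. well_dim (f p) \<and> p < dim (f p) \<Longrightarrow> well_dim (chain f a js)"
  by (induction js rule: rev_induct) auto

lemma dim_bd_and_well_dim_bd: "well_dim t \<Longrightarrow> dim (bd i e t) = min i (dim t) \<and> well_dim (bd i e t)"
proof (induction t arbitrary: i e)
  case (Xi x)
  show ?case
  proof (cases "dim x < i")
    case False
    then show ?thesis
      using Xi by (auto simp: dim_chain intro!: well_dim_chain)
  qed (use Xi in auto)
qed auto

lemma dim_bd: "well_dim t \<Longrightarrow> dim (bd i e t) = min i (dim t)"
  using dim_bd_and_well_dim_bd by blast

lemma well_dim_bd: "well_dim t \<Longrightarrow> well_dim (bd i e t)"
  using dim_bd_and_well_dim_bd by blast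

abbreviation xi_src :: "rt \<Rightarrow> nat \<Rightarrow> rt" where
  "xi_src x \<equiv> \<lambda>l. Xi (bd l False x)"

lemma dim_xi_src_le: "well_dim x \<Longrightarrow> \<forall>p<i. dim (xi_src x p) \<le> Suc p"
  by (simp add: dim_bd)

lemma bd_Idc_funpow_low: "dim t \<le> j \<Longrightarrow> bd j e ((Idc ^^ r) t) = (Idc ^^ min r (j - dim t)) t"
proof (induction r)
  case (Suc r)
  show ?case
  proof (cases "dim t + r < j")
    case True
    then have "Suc r \<le> j - dim t" by arith
    with Suc True show ?thesis by (simp add: min_def)
  next
    case False
    then have "j - dim t \<le> r" by arith
    with Suc False show ?thesis by (simp add: min_def)
  qed
qed (simp add: bd_eq_self)

lemma bd_pad_low: "dim t \<le> j \<Longrightarrow> j \<le> d \<Longrightarrow> bd j e (pad d t) = pad j t"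
  unfolding pad_def by (simp add: bd_Idc_funpow_low)

lemma bd_Idc_funpow_high: "j \<le> dim t \<Longrightarrow> bd j e ((Idc ^^ r) t) = bd j e t"
  by (induction r) auto

lemma bd_pad_high: "j \<le> dim t \<Longrightarrow> bd j e (pad d t) = bd j e t"
  unfolding pad_def by (rule bd_Idc_funpow_high)

lemma bd_chain:
  assumes "well_dim a" "j \<le> dim a" "\<forall>p\<in>set js. p < j \<and> dim (f p) \<le> j"
  shows "bd j e (chain f a js) = chain f (bd j e a) js"
proof (cases "j = dim a")
  case True
  then show ?thesis
    using assms by (simp add: dim_chain bd_eq_self)
next
  case False
  then have "j < dim a" using assms by simp
  with assms(3) show ?thesis
  proof (induction js rule: rev_induct)
    case (snoc p js)
    have "dim (chain f a js) = dim a"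
      using snoc.prems by (intro dim_chain) auto
    moreover have "dim (chain f (bd j e a) js) = j"
      using snoc.prems assms(1) by (subst dim_chain) (auto simp: dim_bd)
    ultimately show ?case
      using snoc by (simp add: cmp_def pad_eq_self max_def bd_pad_low)
  qed simp
qed

lemma dim_xiComp:
  "well_dim y \<Longrightarrow> well_dim x \<Longrightarrow> dim x = dim y \<Longrightarrow> p < dim y \<Longrightarrow> dim (xiComp p y x) = Suc (dim y)"
proof -
  assume "well_dim y" "well_dim x" "dim x = dim y" "p < dim y"
  moreover from this
  have "dim (chain (xi_src x) (bd (Suc p) True y) [0..<p]) = dim (bd (Suc p) True y)"
    by (intro dim_chain) (auto simp: dim_bd)
  ultimately show ?thesis
    by (simp add: xiComp_def dim_bd)
qed

lemma well_dim_xiComp: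
  "well_dim y \<Longrightarrow> well_dim x \<Longrightarrow> dim x = dim y \<Longrightarrow> p < dim y \<Longrightarrow> well_dim (xiComp p y x)"
  unfolding xiComp_def by (auto intro!: well_dim_chain well_dim_bd simp: dim_bd)

lemma wf_imp_well_dim_and_eqv_imp_dim:
  shows "wf k t \<Longrightarrow> well_dim t"
    and "eqv k t u \<Longrightarrow> well_dim t \<and> well_dim u \<and> dim t = dim u"
  by (induction rule: wf_eqv.inducts) (auto simp: well_dim_bd dim_bd well_dim_xiComp dim_xiComp)

lemma wf_imp_well_dim: "wf k t \<Longrightarrow> well_dim t"
  using wf_imp_well_dim_and_eqv_imp_dim(1) .

lemma eqv_dim: "eqv k t u \<Longrightarrow> dim t = dim u"
  using wf_imp_well_dim_and_eqv_imp_dim(2) by blast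

lemma wf_Idc_funpow: "wf k t \<Longrightarrow> wf k ((Idc ^^ r) t)"
  by (induction r) (auto intro: wf_Idc)

lemma wf_pad: "wf k t \<Longrightarrow> wf k (pad d t)"
  unfolding pad_def by (rule wf_Idc_funpow)

lemma eqv_Idc_funpow: "eqv k t u \<Longrightarrow> eqv k ((Idc ^^ r) t) ((Idc ^^ r) u)"
  by (induction r) (auto intro: eqv_Idc)

lemma eqv_pad: "eqv k t u \<Longrightarrow> eqv k (pad d t) (pad d u)"
  unfolding pad_def using eqv_dim eqv_Idc_funpow by metis

lemma eqv_chain:
  assumes "\<And>l. l \<le> j \<Longrightarrow> wf k (chain f a [0..<l])" "eqv k a a'"
    "\<And>l. l < j \<Longrightarrow> eqv k (f l) (f' l)"
  shows "eqv k (chain f a [0..<j]) (chain f' a' [0..<j])"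
  using assms
proof (induction j)
  case (Suc j)
  have IH: "eqv k (chain f a [0..<j]) (chain f' a' [0..<j])"
    using Suc by simp
  moreover have "wf k (chain f a [0..<Suc j])"
    using Suc.prems(1) by blast
  moreover have "dim (f j) = dim (f' j)"
    using Suc.prems(3) eqv_dim by blast
  ultimately show ?case
    using Suc.prems(3) eqv_dim[OF IH] by (auto simp: cmp_def intro!: eqv_Comp eqv_pad)
qed simp

section \<open>Globularity\<close>

text \<open>The globular identities hold for raw terms only up to equality of cells, so they are
  established for all well-formed terms by a simultaneous induction with eqv.\<close>

definition globular :: "nat \<Rightarrow> rt \<Rightarrow> bool" where
  "globular k t \<longleftrightarrow> (\<forall>l i e e'. l < i \<longrightarrow> eqv k (bd l e (bd i e' t)) (bd l e t))"

lemma globularD: "globular k t \<Longrightarrow> l < i \<Longrightarrow> eqv k (bd l e (bd i e' t)) (bd l e t)"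
  unfolding globular_def by blast

lemma globular_eqv: "globular k t \<Longrightarrow> eqv k t u \<Longrightarrow> globular k u"
  unfolding globular_def by (meson eqv_bd eqv_sym eqv_trans)

lemma globular_Ori: "globular k Ori"
  unfolding globular_def by (auto intro: eqv_refl wf_Ori)

lemma globular_Idc: "wf k t \<Longrightarrow> globular k t \<Longrightarrow> globular k (Idc t)"
  unfolding globular_def using wf_imp_well_dim[of k t]
  by (auto intro!: eqv_refl wf_bd wf_Idc simp: dim_bd bd_eq_self)

lemma globular_Eta: "globular k t \<Longrightarrow> globular (Suc k) (Eta t)"
  unfolding globular_def by (auto intro!: eqv_Eta)

lemma globular_bd:
  assumes "wf k t" "globular k t"
  shows "globular k (bd j e'' t)"
  unfolding globular_def
proof (intro allI impI)
  fix l i e e' assume "l < (i::nat)"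
  show "eqv k (bd l e (bd i e' (bd j e'' t))) (bd l e (bd j e'' t))"
  proof (cases "j \<le> i")
    case True
    then have "bd i e' (bd j e'' t) = bd j e'' t"
      using assms wf_imp_well_dim by (intro bd_eq_self) (simp add: dim_bd)
    then show ?thesis using assms by (auto intro!: eqv_refl wf_bd)
  next
    case False
    then show ?thesis
      using assms \<open>l < i\<close> by (meson globularD eqv_bd eqv_sym eqv_trans not_le less_trans)
  qed
qed

lemma eqv_bd_below_composable:
  assumes "globular k a" "globular k b" "eqv k (bd p False a) (bd p True b)" "l < p"
  shows "eqv k (bd l e a) (bd l e b)"
proof -
  have "eqv k (bd l e (bd p False a)) (bd l e (bd p True b))"
    using assms(3) by (rule eqv_bd)
  then show ?thesis
    using assms by (meson globularD eqv_sym eqv_trans)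
qed

lemma globular_Comp:
  assumes "wf k (Comp p a b)" "eqv k (bd p False a) (bd p True b)" "globular k a" "globular k b"
  shows "globular k (Comp p a b)"
  unfolding globular_def
proof (intro allI impI)
  fix l i e e' assume li: "l < (i::nat)"
  have a: "eqv k (bd l e (bd i e' a)) (bd l e a)" and b: "eqv k (bd l e (bd i e' b)) (bd l e b)"
    using assms(3,4) li by (auto intro: globularD)
  show "eqv k (bd l e (bd i e' (Comp p a b))) (bd l e (Comp p a b))"
  proof (cases "dim a \<le> i")
    case True
    then have "bd i e' (Comp p a b) = Comp p a b" by simp
    then show ?thesis using assms(1) by (metis eqv_refl wf_bd)
  next
    case nd: False
    show ?thesis
    proof (cases "i \<le> p")
      case True
      have "eqv k (bd l e a) (bd l e b)" for e
        using assms li True by (intro eqv_bd_below_composable[of k a b p l]) auto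
      then show ?thesis using True nd li a b
        by (cases e; cases e') (auto intro: eqv_trans eqv_sym)
    next
      case False
      have "well_dim a" using assms(1) wf_imp_well_dim by fastforce
      then have "dim (bd i e' a) = i" using nd by (simp add: dim_bd)
      moreover have "wf k (bd l e (bd i e' (Comp p a b)))" using assms(1) by (intro wf_bd)
      ultimately show ?thesis using False nd li a b
        by (cases "l \<le> p"; cases e) (auto intro!: eqv_Comp)
    qed
  qed
qed

lemma dim_chain_upt:
  assumes "\<forall>p<i. dim (f p) \<le> Suc p" "dim a = i" "j \<le> i"
  shows "dim (chain f a [0..<j]) = i"
proof -
  have "\<forall>p\<in>set [0..<j]. dim (f p) \<le> dim a"
  proof
    fix p assume "p \<in> set [0..<j]"
    then have "p < i" using assms by auto
    then show "dim (f p) \<le> dim a" using assms by force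
  qed
  then show ?thesis using assms(2) by (simp add: dim_chain)
qed

lemma chain_upt_Suc_eq_Comp:
  assumes "dim a = i" "\<forall>p<i. dim (f p) \<le> Suc p" "j < i"
  shows "chain f a [0..<Suc j] = Comp j (chain f a [0..<j]) (pad i (f j))"
proof -
  have "dim (chain f a [0..<j]) = i" using assms by (intro dim_chain_upt) auto
  moreover have "dim (f j) \<le> i" using assms by force
  ultimately show ?thesis by (simp add: cmp_def pad_eq_self max_def)
qed

lemma bd_target_chain_upt:
  assumes "well_dim a" "dim a = i" "\<forall>p<i. dim (f p) \<le> Suc p" "l < j" "j \<le> i"
  shows "bd l True (chain f a [0..<j]) = chain f (bd l True a) [0..<l]"
  using assms(4,5)
proof (induction j)
  case (Suc j)
  have "dim (chain f a [0..<j]) = i" using assms Suc by (intro dim_chain_upt) auto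
  then have "bd l True (chain f a [0..<Suc j]) = bd l True (chain f a [0..<j])"
    using chain_upt_Suc_eq_Comp[OF assms(2,3), of j] Suc by simp
  also have "\<dots> = chain f (bd l True a) [0..<l]"
  proof (cases "l = j")
    case True
    have "\<forall>p<j. dim (f p) \<le> j"
    proof (intro allI impI)
      fix p assume "p < j"
      then have "p < i" "Suc p \<le> j" using Suc.prems by auto
      then show "dim (f p) \<le> j" using assms(3) by (meson le_trans)
    qed
    then show ?thesis using assms Suc True by (subst bd_chain) auto
  qed (use Suc in simp)
  finally show ?case .
qed simp

lemma bd_source_chain_upt:
  assumes "dim a = i" "\<forall>p<i. dim (f p) \<le> Suc p" "l \<le> j" "j < i" "l \<le> dim (f j)"
  shows "bd l False (chain f a [0..<Suc j]) = bd l False (f j)"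
proof -
  have "dim (chain f a [0..<j]) = i" using assms by (intro dim_chain_upt) auto
  then show ?thesis using chain_upt_Suc_eq_Comp[OF assms(1,2,4)] assms by (simp add: bd_pad_high)
qed

lemma wf_bd_chain_upt:
  assumes "well_dim a" "l \<le> dim a" "\<forall>p<l. dim (f p) \<le> Suc p"
    "wf k (chain f a [0..<j])" "j \<le> l"
  shows "wf k (chain f (bd l e a) [0..<j])"
proof -
  have "\<forall>p\<in>set [0..<j]. p < l \<and> dim (f p) \<le> l"
  proof
    fix p assume "p \<in> set [0..<j]"
    then have "p < l" using assms(5) by simp
    then show "p < l \<and> dim (f p) \<le> l" using assms(3) by (meson Suc_leI le_trans)
  qed
  then have "bd l e (chain f a [0..<j]) = chain f (bd l e a) [0..<j]"
    using assms(1,2) by (intro bd_chain)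
  then show ?thesis using wf_bd[OF assms(4), of l e] by simp
qed

lemma xi_target_chain_composable:
  assumes "wf k x" "globular k x" "j < i" "i \<le> dim x"
    and prefixes: "\<And>l. l \<le> j \<Longrightarrow> wf k (chain (xi_src x) (bd i True x) [0..<l])"
  shows "eqv k (bd j False (chain (xi_src x) (bd i True x) [0..<j])) (bd j True (pad i (xi_src x j)))"
proof -
  have wdx: "well_dim x" using assms(1) by (rule wf_imp_well_dim)
  let ?a = "bd i True x"
  have a: "well_dim ?a" "dim ?a = i" using wdx assms by (auto simp: well_dim_bd dim_bd)
  have "bd j False (chain (xi_src x) ?a [0..<j]) = chain (xi_src x) (bd j False ?a) [0..<j]"
    using a assms(3) wdx by (intro bd_chain) (auto simp: dim_bd)
  moreover have "bd j True (pad i (xi_src x j)) = chain (xi_src (bd j False x)) (bd j False x) [0..<j]"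
  proof -
    have "dim (xi_src x j) = Suc j" using wdx assms(3,4) by (simp add: dim_bd)
    then show ?thesis using wdx by (simp add: bd_pad_high dim_bd bd_eq_self)
  qed
  moreover have "eqv k (chain (xi_src x) (bd j False ?a) [0..<j])
      (chain (xi_src (bd j False x)) (bd j False x) [0..<j])"
  proof (rule eqv_chain)
    show "wf k (chain (xi_src x) (bd j False ?a) [0..<l])" if "l \<le> j" for l
      using a assms(3,4) wdx prefixes that by (intro wf_bd_chain_upt[where a = ?a]) (auto simp: dim_bd)
    show "eqv k (bd j False ?a) (bd j False x)"
      using assms(2,3) by (rule globularD)
    show "eqv k (xi_src x l) (xi_src (bd j False x) l)" if "l < j" for l
      using globularD[OF assms(2) that] by (rule eqv_Xi[OF eqv_sym])
  qed
  ultimately show ?thesis by simp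
qed

lemma wf_xi_target_chain:
  assumes "wf k x" "globular k x" "i \<le> dim x"
  shows "j \<le> i \<Longrightarrow> wf k (chain (xi_src x) (bd i True x) [0..<j])"
proof (induction j rule: less_induct)
  case (less j)
  have wdx: "well_dim x" using assms(1) by (rule wf_imp_well_dim)
  show ?case
  proof (cases j)
    case 0
    then show ?thesis using assms(1) by (simp add: wf_bd)
  next
    case (Suc j')
    then have j': "j' < i" using less.prems by simp
    have dim_a: "dim (bd i True x) = i" using wdx assms(3) by (simp add: dim_bd)
    have prefixes: "\<And>l. l \<le> j' \<Longrightarrow> wf k (chain (xi_src x) (bd i True x) [0..<l])"
      using less Suc by simp
    have "wf k (Comp j' (chain (xi_src x) (bd i True x) [0..<j']) (pad i (xi_src x j')))"
    proof (rule wf_Comp)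
      have "dim (chain (xi_src x) (bd i True x) [0..<j']) = i"
        using dim_a wdx j' by (intro dim_chain_upt) (auto simp: dim_bd)
      then show "dim (chain (xi_src x) (bd i True x) [0..<j']) = dim (pad i (xi_src x j'))"
        and "j' < dim (chain (xi_src x) (bd i True x) [0..<j'])"
        using wdx j' by (auto simp: dim_bd)
      show "wf k (pad i (xi_src x j'))"
        using assms(1) by (intro wf_pad wf_Xi wf_bd)
      show "eqv k (bd j' False (chain (xi_src x) (bd i True x) [0..<j']))
          (bd j' True (pad i (xi_src x j')))"
        by (rule xi_target_chain_composable[OF assms(1,2) j' assms(3) prefixes])
    qed (use prefixes in simp)
    then show ?thesis
      using Suc chain_upt_Suc_eq_Comp[OF dim_a dim_xi_src_le[OF wdx] j'] by simp
  qed
qed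

lemma globular_Xi_source_source:
  assumes "wf k t" "globular k t" "l < i" "i \<le> dim t"
  shows "eqv k (bd l False (bd i False (Xi t))) (bd l False (Xi t))"
proof (cases "l = 0")
  case True
  then show ?thesis using assms(3,4) by (simp add: eqv_refl wf_Ori)
next
  case False
  then have "l - 1 < i - 1" using assms(3) by arith
  then have "eqv k (bd (l - 1) True (bd (i - 1) True t)) (bd (l - 1) True t)"
    by (rule globularD[OF assms(2)])
  moreover have "dim (bd (i - 1) True t) = i - 1"
    using assms(1,4) wf_imp_well_dim by (simp add: dim_bd)
  ultimately show ?thesis using assms(3,4) False by (simp add: eqv_Xi)
qed

lemma globular_Xi_target_source:
  assumes "wf k t" "globular k t" "l < i" "i \<le> dim t"
  shows "eqv k (bd l True (bd i False (Xi t))) (bd l True (Xi t))"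
proof -
  let ?u = "bd (i - 1) True t"
  have u: "wf k ?u" "globular k ?u" "dim ?u = i - 1"
    using assms wf_imp_well_dim by (auto intro: wf_bd globular_bd simp: dim_bd)
  have "bd l True (bd i False (Xi t)) = chain (xi_src ?u) (bd l True ?u) [0..<l]"
    using assms(3,4) u(3) by (simp; linarith)
  moreover have "bd l True (Xi t) = chain (xi_src t) (bd l True t) [0..<l]"
    using assms(3,4) by simp
  moreover have "eqv k (chain (xi_src ?u) (bd l True ?u) [0..<l]) (chain (xi_src t) (bd l True t) [0..<l])"
  proof (rule eqv_chain)
    show "wf k (chain (xi_src ?u) (bd l True ?u) [0..<j])" if "j \<le> l" for j
      using u assms(3) that by (intro wf_xi_target_chain) auto
    show "eqv k (bd l True ?u) (bd l True t)"
    proof (cases "l < i - 1")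
      case True
      then show ?thesis by (rule globularD[OF assms(2)])
    next
      case False
      then have "l = i - 1" using assms(3) by simp
      then show ?thesis using u by (simp add: bd_eq_self eqv_refl)
    qed
    show "eqv k (xi_src ?u j) (xi_src t j)" if "j < l" for j
      using assms(3) that by (intro eqv_Xi globularD[OF assms(2)]) linarith
  qed
  ultimately show ?thesis by simp
qed

lemma globular_Xi_source_target:
  assumes "wf k t" "globular k t" "l < i" "i \<le> dim t"
  shows "eqv k (bd l False (bd i True (Xi t))) (bd l False (Xi t))"
proof -
  obtain j where i: "i = Suc j" using assms(3) by (cases i) auto
  have wdt: "well_dim t" using assms(1) by (rule wf_imp_well_dim)
  have "bd l False (bd i True (Xi t)) = bd l False (xi_src t j)"
    using assms(3,4) wdt i
    by (simp del: upt_Suc add: bd_source_chain_upt dim_bd)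
  moreover have "eqv k (bd l False (xi_src t j)) (bd l False (Xi t))"
  proof (cases "l = 0")
    case True
    then show ?thesis by (simp add: eqv_refl wf_Ori)
  next
    case False
    have "l - 1 < j" using assms(3) False i by arith
    then have "eqv k (bd (l - 1) True (bd j False t)) (bd (l - 1) True t)"
      by (rule globularD[OF assms(2)])
    then show ?thesis using False wdt assms(3,4) i by (simp add: eqv_Xi dim_bd)
  qed
  ultimately show ?thesis by simp
qed

lemma globular_Xi_target_target:
  assumes "wf k t" "globular k t" "l < i" "i \<le> dim t"
  shows "eqv k (bd l True (bd i True (Xi t))) (bd l True (Xi t))"
proof -
  let ?a = "bd i True t"
  have wdt: "well_dim t" using assms(1) by (rule wf_imp_well_dim)
  have a: "well_dim ?a" "dim ?a = i" using wdt assms(4) by (auto simp: well_dim_bd dim_bd)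
  have "bd l True (bd i True (Xi t)) = chain (xi_src t) (bd l True ?a) [0..<l]"
    using assms(3,4) bd_target_chain_upt[OF a dim_xi_src_le[OF wdt] assms(3)] by simp
  moreover have "bd l True (Xi t) = chain (xi_src t) (bd l True t) [0..<l]"
    using assms(3,4) by simp
  moreover have "eqv k (chain (xi_src t) (bd l True ?a) [0..<l]) (chain (xi_src t) (bd l True t) [0..<l])"
  proof (rule eqv_chain)
    show "wf k (chain (xi_src t) (bd l True ?a) [0..<j])" if "j \<le> l" for j
      using a assms that wdt
      by (intro wf_bd_chain_upt[where a = ?a] wf_xi_target_chain) (auto simp: dim_bd)
    show "eqv k (bd l True ?a) (bd l True t)"
      using assms(2,3) by (rule globularD)
    show "eqv k (xi_src t j) (xi_src t j)" for j
      using assms(1) by (intro eqv_refl wf_Xi wf_bd)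
  qed
  ultimately show ?thesis by simp
qed

lemma globular_Xi:
  assumes "wf k t" "globular k t"
  shows "globular k (Xi t)"
  unfolding globular_def
proof (intro allI impI)
  fix l i e e' assume li: "l < (i::nat)"
  show "eqv k (bd l e (bd i e' (Xi t))) (bd l e (Xi t))"
  proof (cases "dim t < i")
    case True
    then have "bd i e' (Xi t) = Xi t" by simp
    then show ?thesis using assms(1) by (metis eqv_refl wf_bd wf_Xi)
  next
    case False
    then have "i \<le> dim t" by simp
    note facts = globular_Xi_source_source[OF assms li this] globular_Xi_target_source[OF assms li this]
      globular_Xi_source_target[OF assms li this] globular_Xi_target_target[OF assms li this]
    show ?thesis by (cases e; cases e') (use facts in simp_all)
  qed
qed

text \<open>For each axiom of eqv one side is globular by the closure lemmas, and globular_eqv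
  transfers this to the other side.\<close>

lemma wf_globular_and_eqv_globular:
  shows "wf k t \<Longrightarrow> globular k t"
    and "eqv k t u \<Longrightarrow> globular k t \<and> globular k u"
proof (induction rule: wf_eqv.inducts)
  case (wf_Comp k a b p)
  then show ?case by (intro globular_Comp wf_eqv.wf_Comp)
qed (meson globular_eqv globular_Ori globular_Xi globular_Idc globular_Eta globular_bd
    eqv_sym wf_eqv.intros)+

lemma wf_globular: "wf k t \<Longrightarrow> globular k t"
  using wf_globular_and_eqv_globular(1) .

section \<open>Relations of \<open>\<lambda>\<close> preserved by \<open>\<eta>\<close> and \<open>\<xi>\<close>\<close>

text \<open>The generators of lam_rel with well-formedness of the composite replaced by the premises of
  wf_Comp, which cannot be recovered from wf (Comp j a b) since wf is closed under eqv.\<close>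

inductive_set lam_gen :: "nat \<Rightarrow> nat \<Rightarrow> (rt \<Rightarrow>\<^sub>0 int) set" for k d where
  lam_gen_eqv: "\<lbrakk>eqv k t u; dim t = d\<rbrakk> \<Longrightarrow> frag_of t - frag_of u \<in> lam_gen k d"
| lam_gen_comp: "\<lbrakk>wf k a; wf k b; dim a = dim b; j < dim a; eqv k (bd j False a) (bd j True b);
    dim a = d\<rbrakk> \<Longrightarrow> frag_of (Comp j a b) - frag_of a - frag_of b \<in> lam_gen k d"
| lam_gen_zero: "0 \<in> lam_gen k d"
| lam_gen_add: "\<lbrakk>f \<in> lam_gen k d; g \<in> lam_gen k d\<rbrakk> \<Longrightarrow> f + g \<in> lam_gen k d"
| lam_gen_minus: "f \<in> lam_gen k d \<Longrightarrow> - f \<in> lam_gen k d"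

lemma lam_gen_subset_lam_rel: "f \<in> lam_gen k d \<Longrightarrow> f \<in> lam_rel k d"
proof (induction rule: lam_gen.induct)
  case (lam_gen_comp a b j)
  then have "wf k (Comp j a b)" by (intro wf_Comp)
  with lam_gen_comp show ?case by (auto intro: lam_rel.intros)
qed (auto intro: lam_rel.intros)

lemma lam_gen_diff: "f \<in> lam_gen k d \<Longrightarrow> g \<in> lam_gen k d \<Longrightarrow> f - g \<in> lam_gen k d"
  by (metis lam_gen_add lam_gen_minus diff_conv_add_uminus)

lemma lam_gen_Idc:
  assumes "wf k (Idc u)"
  shows "frag_of (Idc u) \<in> lam_gen k (Suc (dim u))"
proof -
  let ?p = "dim u"
  have bd: "bd ?p e (Idc u) = u" for e by (simp add: bd_eq_self)
  have "eqv k (Comp ?p (Idc u) (Idc u)) (Idc u)"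
    using eqv_unitL[OF assms, of ?p] by (simp add: bd_eq_self pad_def)
  then have "frag_of (Comp ?p (Idc u) (Idc u)) - frag_of (Idc u) \<in> lam_gen k (Suc (dim u))"
    by (intro lam_gen_eqv) auto
  moreover have "frag_of (Comp ?p (Idc u) (Idc u)) - frag_of (Idc u) - frag_of (Idc u) \<in> lam_gen k (Suc (dim u))"
    using assms wf_bd[OF assms, of ?p True] by (intro lam_gen_comp) (auto simp: bd bd_eq_self intro: eqv_refl)
  ultimately show ?thesis
    using lam_gen_diff by fastforce
qed

lemma lam_gen_pad:
  assumes "wf k u" "dim u < d"
  shows "frag_of (pad d u) \<in> lam_gen k d"
proof -
  obtain r where r: "d - dim u = Suc r" using assms by (cases "d - dim u") auto
  have "pad d u = Idc ((Idc ^^ r) u)" unfolding pad_def r by simp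
  moreover have "wf k (Idc ((Idc ^^ r) u))"
    using assms(1) by (intro wf_Idc wf_Idc_funpow)
  moreover have "Suc (dim ((Idc ^^ r) u)) = d" using r by simp
  ultimately show ?thesis using lam_gen_Idc by metis
qed

definition frag_map :: "('a \<Rightarrow> 'b) \<Rightarrow> ('a \<Rightarrow>\<^sub>0 int) \<Rightarrow> 'b \<Rightarrow>\<^sub>0 int" where
  "frag_map g = frag_extend (frag_of \<circ> g)"

lemma frag_map_of [simp]: "frag_map g (frag_of t) = frag_of (g t)"
  by (simp add: frag_map_def)

lemma frag_map_0 [simp]: "frag_map g 0 = 0"
  by (simp add: frag_map_def)

lemma frag_map_add: "frag_map g (a + b) = frag_map g a + frag_map g b"
  by (simp add: frag_map_def frag_extend_add)

lemma frag_map_minus: "frag_map g (- a) = - frag_map g a"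
  by (simp add: frag_map_def frag_extend_minus)

lemma frag_map_diff: "frag_map g (a - b) = frag_map g a - frag_map g b"
  by (simp add: frag_map_def frag_extend_diff)

lemma frag_map_sum: "finite I \<Longrightarrow> frag_map g (\<Sum>i\<in>I. h i) = (\<Sum>i\<in>I. frag_map g (h i))"
  by (simp add: frag_map_def frag_extend_sum comp_def)

lemma frag_map_frag_map: "frag_map g (frag_map h c) = frag_map (g \<circ> h) c"
  by (simp add: frag_map_def frag_extend_compose comp_assoc)

lemma frag_map_ident: "frag_map (\<lambda>x. x) c = c"
  by (simp add: frag_map_def comp_def frag_expansion[symmetric])

lemma lam_gen_frag_map:
  assumes "f \<in> lam_gen k d"
    and eqv_case: "\<And>t u. eqv k t u \<Longrightarrow> dim t = d \<Longrightarrow> frag_of (g t) - frag_of (g u) \<in> lam_gen k' d'"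
    and comp_case: "\<And>j a b. \<lbrakk>wf k a; wf k b; dim a = dim b; j < dim a; eqv k (bd j False a) (bd j True b);
      dim a = d\<rbrakk> \<Longrightarrow> frag_of (g (Comp j a b)) - frag_of (g a) - frag_of (g b) \<in> lam_gen k' d'"
  shows "frag_map g f \<in> lam_gen k' d'"
  using assms(1)
proof (induction rule: lam_gen.induct)
  case (lam_gen_eqv t u)
  then show ?case using eqv_case by (simp add: frag_map_diff)
next
  case (lam_gen_comp a b j)
  then show ?case using comp_case by (simp add: frag_map_diff)
qed (auto simp: frag_map_add frag_map_minus intro: lam_gen.intros)

lemma lam_gen_Eta: "f \<in> lam_gen k d \<Longrightarrow> frag_map Eta f \<in> lam_gen (Suc k) d"
proof (erule lam_gen_frag_map)
  fix j a b
  assume comp: "wf k a" "wf k b" "dim a = dim b" "j < dim a" "eqv k (bd j False a) (bd j True b)" "dim a = d"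
  then have "wf k (Comp j a b)" by (intro wf_Comp)
  then have "frag_of (Eta (Comp j a b)) - frag_of (Comp j (Eta a) (Eta b)) \<in> lam_gen (Suc k) d"
    using comp by (intro lam_gen_eqv eqv_Eta_Comp) auto
  moreover have "frag_of (Comp j (Eta a) (Eta b)) - frag_of (Eta a) - frag_of (Eta b) \<in> lam_gen (Suc k) d"
    using comp by (intro lam_gen_comp) (auto intro: wf_Eta eqv_Eta)
  ultimately have "(frag_of (Eta (Comp j a b)) - frag_of (Comp j (Eta a) (Eta b)))
      + (frag_of (Comp j (Eta a) (Eta b)) - frag_of (Eta a) - frag_of (Eta b)) \<in> lam_gen (Suc k) d"
    by (rule lam_gen_add)
  then show "frag_of (Eta (Comp j a b)) - frag_of (Eta a) - frag_of (Eta b) \<in> lam_gen (Suc k) d"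
    by (simp add: algebra_simps)
qed (auto intro: lam_gen_eqv eqv_Eta)

lemma lam_gen_Eta_funpow: "f \<in> lam_gen k d \<Longrightarrow> frag_map (Eta ^^ r) f \<in> lam_gen (k + r) d"
proof (induction r)
  case 0
  then show ?case by (simp add: frag_map_ident)
next
  case (Suc r)
  then show ?case
    using lam_gen_Eta[OF Suc.IH[OF Suc.prems]] by (simp add: frag_map_frag_map comp_def)
qed

abbreviation xi_comp_prefix :: "nat \<Rightarrow> rt \<Rightarrow> rt \<Rightarrow> rt" where
  "xi_comp_prefix p y x \<equiv> chain (xi_src x) (bd (Suc p) True y) [0..<p]"

lemma xiComp_eq_Comp:
  assumes "well_dim a" "well_dim b" "dim a = dim b" "j < dim a"
  shows "xiComp j a b = Comp (Suc j) (Comp j (pad (Suc (dim a)) (xi_comp_prefix j a b)) (Xi b)) (Xi a)"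
proof -
  have "dim (xi_comp_prefix j a b) = Suc j"
    using assms by (intro dim_chain_upt) (auto simp: dim_bd)
  then show ?thesis
    using assms by (simp add: xiComp_def cmp_def pad_eq_self max_def)
qed

context
  fixes k j :: nat and a b :: rt
  assumes wf_a: "wf k a" and wf_b: "wf k b" and dim_ab: "dim a = dim b" and j: "j < dim a"
    and composable: "eqv k (bd j False a) (bd j True b)"
begin

lemma dim_xi_comp_prefix: "dim (xi_comp_prefix j a b) = Suc j"
  using wf_a wf_b j wf_imp_well_dim by (intro dim_chain_upt) (auto simp: dim_bd)

lemma eqv_xi_comp_prefix:
  "eqv k (chain (xi_src a) (bd (Suc j) True a) [0..<j]) (xi_comp_prefix j a b)"
proof (rule eqv_chain)
  show "wf k (chain (xi_src a) (bd (Suc j) True a) [0..<l])" if "l \<le> j" for l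
    using wf_a wf_globular j that by (intro wf_xi_target_chain) auto
  show "eqv k (bd (Suc j) True a) (bd (Suc j) True a)"
    using wf_a by (intro eqv_refl wf_bd)
  show "eqv k (xi_src a l) (xi_src b l)" if "l < j" for l
    using wf_a wf_b composable that by (intro eqv_Xi eqv_bd_below_composable wf_globular)
qed

lemma xi_comp_prefix_composable: "eqv k (bd j False (xi_comp_prefix j a b)) (bd j True (Xi b))"
proof -
  have wd: "well_dim a" "well_dim b" using wf_a wf_b by (auto intro: wf_imp_well_dim)
  have "bd j False (xi_comp_prefix j a b) = chain (xi_src b) (bd j False (bd (Suc j) True a)) [0..<j]"
    using wd dim_ab j by (intro bd_chain) (auto simp: dim_bd well_dim_bd)
  moreover have "bd j True (Xi b) = chain (xi_src b) (bd j True b) [0..<j]"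
    using dim_ab j by simp
  moreover have "eqv k (chain (xi_src b) (bd j True b) [0..<j])
      (chain (xi_src b) (bd j False (bd (Suc j) True a)) [0..<j])"
  proof (rule eqv_chain)
    show "wf k (chain (xi_src b) (bd j True b) [0..<l])" if "l \<le> j" for l
      using wf_b wf_globular dim_ab j that by (intro wf_xi_target_chain) auto
    have "eqv k (bd j False (bd (Suc j) True a)) (bd j False a)"
      using wf_globular[OF wf_a] by (rule globularD) simp
    then show "eqv k (bd j True b) (bd j False (bd (Suc j) True a))"
      using composable by (meson eqv_sym eqv_trans)
    show "eqv k (xi_src b l) (xi_src b l)" for l
      using wf_b by (intro eqv_refl wf_Xi wf_bd)
  qed
  ultimately show ?thesis by (simp add: eqv_sym)
qed

lemma wf_xi_comp_lower:
  "wf k (Comp j (pad (Suc (dim a)) (xi_comp_prefix j a b)) (Xi b))"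
proof (rule wf_Comp)
  show "wf k (pad (Suc (dim a)) (xi_comp_prefix j a b))"
    using eqv_xi_comp_prefix by (intro wf_pad wf_eqvR)
  show "eqv k (bd j False (pad (Suc (dim a)) (xi_comp_prefix j a b))) (bd j True (Xi b))"
    using xi_comp_prefix_composable dim_xi_comp_prefix by (simp add: bd_pad_high)
qed (use wf_b dim_ab j dim_xi_comp_prefix in \<open>auto intro: wf_Xi\<close>)

lemma xi_comp_upper_composable:
  "eqv k (bd (Suc j) False (Comp j (pad (Suc (dim a)) (xi_comp_prefix j a b)) (Xi b)))
     (bd (Suc j) True (Xi a))"
proof -
  have wd_a: "well_dim a" using wf_a by (rule wf_imp_well_dim)
  have "bd (Suc j) False (Comp j (pad (Suc (dim a)) (xi_comp_prefix j a b)) (Xi b))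
      = Comp j (xi_comp_prefix j a b) (Xi (bd j True b))"
    using dim_xi_comp_prefix dim_ab j by (simp add: bd_pad_low pad_eq_self)
  moreover have "bd (Suc j) True (Xi a) = Comp j (chain (xi_src a) (bd (Suc j) True a) [0..<j]) (xi_src a j)"
  proof -
    have "bd (Suc j) True (Xi a) = chain (xi_src a) (bd (Suc j) True a) [0..<Suc j]"
      using j by simp
    also have "\<dots> = Comp j (chain (xi_src a) (bd (Suc j) True a) [0..<j]) (pad (Suc j) (xi_src a j))"
      using wd_a j by (intro chain_upt_Suc_eq_Comp) (auto simp: dim_bd)
    finally show ?thesis using wd_a j by (simp add: pad_eq_self dim_bd)
  qed
  moreover have "wf k (Comp j (xi_comp_prefix j a b) (Xi (bd j True b)))"
    using wf_bd[OF wf_xi_comp_lower, of "Suc j" False] calculation(1) by simp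
  ultimately show ?thesis
    using eqv_sym[OF eqv_xi_comp_prefix] eqv_Xi[OF eqv_sym[OF composable]] by (simp add: eqv_Comp)
qed

lemma lam_gen_Xi_Comp:
  "frag_of (Xi (Comp j a b)) - frag_of (Xi a) - frag_of (Xi b) \<in> lam_gen k (Suc (dim a))"
proof -
  let ?d = "Suc (dim a)" and ?P = "pad (Suc (dim a)) (xi_comp_prefix j a b)"
  let ?Q = "Comp j ?P (Xi b)"
  have wd: "well_dim a" "well_dim b" using wf_a wf_b by (auto intro: wf_imp_well_dim)
  have "frag_of (Xi (Comp j a b)) - frag_of (xiComp j a b) \<in> lam_gen k ?d"
    using wf_a wf_b dim_ab j composable by (intro lam_gen_eqv eqv_Xi_Comp wf_Comp) auto
  moreover have "frag_of (Comp (Suc j) ?Q (Xi a)) - frag_of ?Q - frag_of (Xi a) \<in> lam_gen k ?d"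
    using wf_xi_comp_lower wf_a xi_comp_upper_composable dim_xi_comp_prefix dim_ab j
    by (intro lam_gen_comp wf_Xi) auto
  moreover have "frag_of ?Q - frag_of ?P - frag_of (Xi b) \<in> lam_gen k ?d"
    using wf_xi_comp_lower
  proof (intro lam_gen_comp)
    show "wf k ?P" using eqv_xi_comp_prefix by (intro wf_pad wf_eqvR)
    show "eqv k (bd j False ?P) (bd j True (Xi b))"
      using xi_comp_prefix_composable dim_xi_comp_prefix by (simp add: bd_pad_high)
  qed (use wf_b dim_ab j dim_xi_comp_prefix in \<open>auto intro: wf_Xi\<close>)
  moreover have "frag_of ?P \<in> lam_gen k ?d"
    using eqv_xi_comp_prefix dim_xi_comp_prefix j by (intro lam_gen_pad wf_eqvR) auto
  ultimately have "(frag_of (Xi (Comp j a b)) - frag_of (xiComp j a b))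
      + (frag_of (Comp (Suc j) ?Q (Xi a)) - frag_of ?Q - frag_of (Xi a))
      + (frag_of ?Q - frag_of ?P - frag_of (Xi b)) + frag_of ?P \<in> lam_gen k ?d"
    by (intro lam_gen_add)
  then show ?thesis
    using xiComp_eq_Comp[OF wd dim_ab j] by (simp add: algebra_simps)
qed

end

lemma lam_gen_Xi: "f \<in> lam_gen k d \<Longrightarrow> frag_map Xi f \<in> lam_gen k (Suc d)"
  by (erule lam_gen_frag_map) (auto intro: lam_gen_eqv eqv_Xi, metis lam_gen_Xi_Comp)

lemma src_Xi: "0 < dim y \<Longrightarrow> src (Xi y) = Xi (tgt y)"
  by (simp add: src_def tgt_def)

lemma tgt_Xi: "tgt (Xi y) = chain (xi_src y) y [0..<dim y]"
  by (simp add: tgt_def bd_eq_self)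

lemma src_Eta_funpow: "src ((Eta ^^ r) t) = (Eta ^^ r) (src t)"
  by (simp add: src_def bd_Eta_funpow)

lemma tgt_Eta_funpow: "tgt ((Eta ^^ r) t) = (Eta ^^ r) (tgt t)"
  by (simp add: tgt_def bd_Eta_funpow)

context
  fixes k :: nat and y :: rt
  assumes wf_y: "wf k y"
begin

lemma lam_gen_xi_target_chain_step:
  assumes "j < dim y"
  shows "frag_of (chain (xi_src y) y [0..<Suc j]) - frag_of (chain (xi_src y) y [0..<j])
    - frag_of (pad (dim y) (xi_src y j)) \<in> lam_gen k (dim y)"
proof -
  have wd: "well_dim y" using wf_y by (rule wf_imp_well_dim)
  have prefixes: "wf k (chain (xi_src y) y [0..<l])" if "l \<le> dim y" for l
    using wf_xi_target_chain[OF wf_y wf_globular[OF wf_y], where i = "dim y" and j = l] that by (simp add: bd_eq_self)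
  have "eqv k (bd j False (chain (xi_src y) y [0..<j])) (bd j True (pad (dim y) (xi_src y j)))"
    using xi_target_chain_composable[OF wf_y wf_globular[OF wf_y] assms order_refl] prefixes assms
    by (simp add: bd_eq_self)
  moreover have "dim (chain (xi_src y) y [0..<j]) = dim y"
    using wd assms by (intro dim_chain_upt) (auto simp: dim_bd)
  ultimately show ?thesis
    using chain_upt_Suc_eq_Comp[OF refl dim_xi_src_le[OF wd] assms] prefixes[of j] wf_y assms wd
    by (auto simp: dim_bd intro!: lam_gen_comp wf_pad wf_Xi wf_bd)
qed

lemma lam_gen_xi_target_chain_degenerate:
  "j < dim y \<Longrightarrow> frag_of (chain (xi_src y) y [0..<j]) - frag_of y \<in> lam_gen k (dim y)"
proof (induction j)
  case 0
  then show ?case by (simp add: lam_gen_zero)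
next
  case (Suc j)
  have "frag_of (pad (dim y) (xi_src y j)) \<in> lam_gen k (dim y)"
    using Suc.prems wf_y wf_imp_well_dim[OF wf_y] by (intro lam_gen_pad wf_Xi wf_bd) (auto simp: dim_bd)
  with lam_gen_xi_target_chain_step[of j] Suc
  have "(frag_of (chain (xi_src y) y [0..<Suc j]) - frag_of (chain (xi_src y) y [0..<j])
      - frag_of (pad (dim y) (xi_src y j))) + (frag_of (chain (xi_src y) y [0..<j]) - frag_of y)
      + frag_of (pad (dim y) (xi_src y j)) \<in> lam_gen k (dim y)"
    by (intro lam_gen_add) auto
  then show ?case by (simp add: algebra_simps)
qed

text \<open>In \<open>t(\<xi>\<^sub>y) = y \<star>\<^sub>0 \<xi>\<^bsub>s\<^sub>0 y\<^esub> \<star>\<^sub>1 \<dots> \<star>\<^sub>m\<^sub>-\<^sub>1 \<xi>\<^bsub>s\<^sub>m\<^sub>-\<^sub>1 y\<^esub>\<close> all factors but the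
  first and the last are degenerate as m-cells.\<close>

lemma lam_gen_tgt_Xi:
  assumes "0 < dim y"
  shows "frag_of (tgt (Xi y)) - frag_of y - frag_of (Xi (src y)) \<in> lam_gen k (dim y)"
proof -
  obtain j where j: "dim y = Suc j" using assms by (cases "dim y") auto
  have "pad (dim y) (xi_src y j) = Xi (src y)"
    using wf_imp_well_dim[OF wf_y] j by (simp add: src_def pad_eq_self dim_bd)
  with lam_gen_xi_target_chain_step[of j] lam_gen_xi_target_chain_degenerate[of j] j
  have "(frag_of (chain (xi_src y) y [0..<Suc j]) - frag_of (chain (xi_src y) y [0..<j])
      - frag_of (Xi (src y))) + (frag_of (chain (xi_src y) y [0..<j]) - frag_of y) \<in> lam_gen k (dim y)"
    by (intro lam_gen_add) auto
  then show ?thesis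
    using j by (simp add: tgt_Xi algebra_simps del: upt_Suc)
qed

end

lemma lam_gen_Eta_funpow_Xi:
  "f \<in> lam_gen k d \<Longrightarrow> frag_map ((Eta ^^ r) \<circ> Xi) f \<in> lam_gen (k + r) (Suc d)"
  using lam_gen_Eta_funpow[OF lam_gen_Xi] by (simp add: frag_map_frag_map)

section \<open>Faces of the cells \<open>\<langle>i\<^sub>0,\<dots>,i\<^sub>m\<rangle>\<close>\<close>

lemma dim_brk: "dim (brk xs) = length xs - 1"
  by (induction xs rule: brk.induct) (auto simp: funpow_swap1)

lemma wf_Eta_funpow: "wf k t \<Longrightarrow> wf (k + r) ((Eta ^^ r) t)"
  by (induction r) (auto intro: wf_Eta)

lemma wf_brk: "\<forall>a\<in>set xs. a \<le> k \<Longrightarrow> wf k (brk xs)"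
proof (induction xs arbitrary: k rule: brk.induct)
  case 1
  then show ?case by (simp add: wf_Ori)
next
  case (2 i)
  then show ?case using wf_Eta_funpow[OF wf_Ori, of "k - i" i] by simp
next
  case (3 i j r)
  then have "wf (k - i) (brk (map (\<lambda>a. a - i) (j # r)))" by (intro "3.IH") auto
  then show ?case using wf_Eta_funpow[OF wf_Xi, of "k - i" _ i] 3 by simp
qed

lemma Eta_funpow_Eta_funpow: "(Eta ^^ r) ((Eta ^^ i) t) = (Eta ^^ (i + r)) t"
  by (metis funpow_add comp_apply add.commute)

lemma Eta_funpow_brk: "xs \<noteq> [] \<Longrightarrow> (Eta ^^ r) (brk xs) = brk (map (\<lambda>a. a + r) xs)"
proof (induction xs rule: brk.induct)
  case (3 i j xs)
  have "map (\<lambda>a. a - (i + r)) (map (\<lambda>a. a + r) (j # xs)) = map (\<lambda>a. a - i) (j # xs)"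
    by simp
  then show ?case
    by (simp only: list.map brk.simps Eta_funpow_Eta_funpow)
qed (simp_all add: Eta_funpow_Eta_funpow)

lemma brk_Cons: "xs \<noteq> [] \<Longrightarrow> brk (i # xs) = (Eta ^^ i) (Xi (brk (map (\<lambda>a. a - i) xs)))"
  by (cases xs) auto

lemma face_0_Cons: "face 0 (x # xs) = xs"
  by (simp add: face_def)

lemma face_Suc_Cons: "face (Suc j) (x # xs) = x # face j xs"
  by (simp add: face_def)

lemma face_map: "face j (map f xs) = map f (face j xs)"
  by (simp add: face_def take_map drop_map)

lemma length_face: "j < length xs \<Longrightarrow> length (face j xs) = length xs - 1"
  by (simp add: face_def)

definition face_sum :: "(nat \<Rightarrow> bool) \<Rightarrow> nat list \<Rightarrow> rt \<Rightarrow>\<^sub>0 int" where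
  "face_sum P xs = (\<Sum>j\<in>{j. j < length xs \<and> P j}. frag_of (brk (face j xs)))"

lemma face_sum_Cons:
  assumes "2 \<le> length xs" "\<forall>a\<in>set xs. i < a"
  shows "face_sum P (i # xs) = (if P 0 then frag_of ((Eta ^^ i) (brk (map (\<lambda>a. a - i) xs))) else 0)
    + frag_map ((Eta ^^ i) \<circ> Xi) (face_sum (P \<circ> Suc) (map (\<lambda>a. a - i) xs))"
proof -
  have face_Suc: "brk (face (Suc j) (i # xs)) = (Eta ^^ i) (Xi (brk (face j (map (\<lambda>a. a - i) xs))))"
    if "j < length xs" for j
  proof -
    have "face j xs \<noteq> []" using length_face[OF that] assms(1) by auto
    then show ?thesis by (simp add: face_Suc_Cons brk_Cons face_map)
  qed
  have face_0: "brk (face 0 (i # xs)) = (Eta ^^ i) (brk (map (\<lambda>a. a - i) xs))"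
  proof -
    have "map (\<lambda>a. a + i) (map (\<lambda>a. a - i) xs) = xs" using assms(2) by (induction xs) auto
    moreover have "map (\<lambda>a. a - i) xs \<noteq> []" using assms(1) by auto
    ultimately show ?thesis by (metis Eta_funpow_brk face_0_Cons)
  qed
  have indices: "{j. j < length (i # xs) \<and> P j}
      = (if P 0 then {0} else {}) \<union> Suc ` {j. j < length xs \<and> P (Suc j)}"
    by (auto simp: less_Suc_eq_0_disj)
  show ?thesis
    unfolding face_sum_def indices
    by (simp add: sum.union_disjoint sum.reindex frag_map_sum face_0 face_Suc)
qed

lemma src_tgt_brk_pair:
  assumes "i < j"
  shows "src (brk [i, j]) = brk [i]" and "tgt (brk [i, j]) = brk [j]"
proof -
  have "(Eta ^^ i) ((Eta ^^ (j - i)) Ori) = (Eta ^^ j) Ori"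
    using assms by (simp add: Eta_funpow_Eta_funpow)
  then show "src (brk [i, j]) = brk [i]" and "tgt (brk [i, j]) = brk [j]"
    by (simp_all add: src_def tgt_def bd_Eta_funpow bd_eq_self)
qed

lemma lam_gen_src_tgt_brk_Cons:
  fixes i k :: nat and xs :: "nat list"
  defines "ys \<equiv> map (\<lambda>a. a - i) xs"
  assumes "2 \<le> length xs" "\<forall>a\<in>set xs. i < a \<and> a \<le> k"
    and src_ys: "frag_of (src (brk ys)) - face_sum odd ys \<in> lam_gen (k - i) (length xs - 2)"
    and tgt_ys: "frag_of (tgt (brk ys)) - face_sum even ys \<in> lam_gen (k - i) (length xs - 2)"
  shows "frag_of (src (brk (i # xs))) - face_sum odd (i # xs) \<in> lam_gen k (length xs - 1)"
    and "frag_of (tgt (brk (i # xs))) - face_sum even (i # xs) \<in> lam_gen k (length xs - 1)"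
proof -
  let ?y = "brk ys" and ?g = "(Eta ^^ i) \<circ> Xi"
  have ik: "k - i + i = k" and d: "Suc (length xs - 2) = length xs - 1"
    using assms(2,3) by (cases xs; auto)+
  have dim_y: "dim ?y = length xs - 1" and "0 < dim ?y"
    using assms(2) by (auto simp: dim_brk ys_def)
  have wf_y: "wf (k - i) ?y"
    using assms(3) by (intro wf_brk) (auto simp: ys_def)
  have "xs \<noteq> []" using assms(2) by auto
  then have brk_xs: "brk (i # xs) = (Eta ^^ i) (Xi ?y)"
    by (simp add: brk_Cons ys_def)
  have faces: "face_sum odd (i # xs) = frag_map ?g (face_sum even ys)"
    "face_sum even (i # xs) = frag_of ((Eta ^^ i) ?y) + frag_map ?g (face_sum odd ys)"
    using face_sum_Cons[OF assms(2)] assms(3) by (simp_all add: ys_def comp_def)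
  show "frag_of (src (brk (i # xs))) - face_sum odd (i # xs) \<in> lam_gen k (length xs - 1)"
    using lam_gen_Eta_funpow_Xi[OF tgt_ys, of i] \<open>0 < dim ?y\<close>
    by (simp add: brk_xs faces src_Eta_funpow src_Xi frag_map_diff ik d)
  have "frag_map (Eta ^^ i) (frag_of (tgt (Xi ?y)) - frag_of ?y - frag_of (Xi (src ?y)))
      + frag_map ?g (frag_of (src ?y) - face_sum odd ys) \<in> lam_gen k (length xs - 1)"
    using lam_gen_Eta_funpow[OF lam_gen_tgt_Xi[OF wf_y \<open>0 < dim ?y\<close>], of i]
      lam_gen_Eta_funpow_Xi[OF src_ys, of i]
    by (intro lam_gen_add) (simp_all add: dim_y ik d)
  then show "frag_of (tgt (brk (i # xs))) - face_sum even (i # xs) \<in> lam_gen k (length xs - 1)"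
    by (simp add: brk_xs faces tgt_Eta_funpow frag_map_diff frag_map_add algebra_simps)
qed

lemma lam_gen_src_tgt_brk:
  assumes "2 \<le> length xs" "sorted_wrt (<) xs" "\<forall>a\<in>set xs. a \<le> k"
  shows "frag_of (src (brk xs)) - face_sum odd xs \<in> lam_gen k (length xs - 2)
    \<and> frag_of (tgt (brk xs)) - face_sum even xs \<in> lam_gen k (length xs - 2)"
  using assms
proof (induction "length xs" arbitrary: xs k rule: less_induct)
  case less
  obtain i xs' where xs: "xs = i # xs'" and "xs' \<noteq> []"
    using less.prems(1) by (cases xs) (auto simp: Suc_le_length_iff)
  have bounds: "\<forall>a\<in>set xs'. i < a \<and> a \<le> k"
    using less.prems(2,3) xs by auto
  show ?case
  proof (cases "length xs' = 1")
    case True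
    then obtain i1 where "xs' = [i1]" by (cases xs') (auto simp: length_Suc_conv)
    moreover have "{j. j < length [i, i1] \<and> odd j} = {1}" "{j. j < length [i, i1] \<and> even j} = {0}"
      by (auto elim: oddE)
    then have "face_sum odd [i, i1] = frag_of (brk [i])" "face_sum even [i, i1] = frag_of (brk [i1])"
      unfolding face_sum_def by (simp_all add: face_def)
    ultimately show ?thesis
      using bounds xs src_tgt_brk_pair[of i i1] by (simp add: lam_gen_zero)
  next
    case False
    let ?ys = "map (\<lambda>a. a - i) xs'"
    have "2 \<le> length ?ys"
      using False \<open>xs' \<noteq> []\<close> by (cases xs') (auto simp: Suc_le_eq)
    moreover have "sorted_wrt (<) ?ys"
      using less.prems(2) bounds unfolding xs sorted_wrt_map by (induction xs') auto
    moreover have "\<forall>a\<in>set ?ys. a \<le> k - i" using bounds by auto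
    moreover have "length ?ys < length xs" using xs by simp
    ultimately have "frag_of (src (brk ?ys)) - face_sum odd ?ys \<in> lam_gen (k - i) (length xs' - 2)
        \<and> frag_of (tgt (brk ?ys)) - face_sum even ?ys \<in> lam_gen (k - i) (length xs' - 2)"
      using less.hyps by (metis length_map)
    then show ?thesis
      using lam_gen_src_tgt_brk_Cons[OF _ bounds] \<open>2 \<le> length ?ys\<close> xs by simp
  qed
qed

theorem mainTheorem11:
  fixes n :: int and m :: nat and xs :: "nat list"
  assumes "n \<ge> -1" and "m \<ge> 1"
    and "length xs = Suc m" and "sorted_wrt (<) xs" and "\<forall>i\<in>set xs. int i \<le> n"
  shows "lam_eq (nat n) (m - 1) (cls (src (brk xs)))
           (\<Sum>j\<in>{j. j \<le> m \<and> odd j}. cls (brk (face j xs)))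
       \<and> lam_eq (nat n) (m - 1) (cls (tgt (brk xs)))
           (\<Sum>j\<in>{j. j \<le> m \<and> even j}. cls (brk (face j xs)))"
proof -
  have "\<forall>a\<in>set xs. a \<le> nat n" using assms(5) by auto
  then have "frag_of (src (brk xs)) - face_sum odd xs \<in> lam_gen (nat n) (m - 1)
      \<and> frag_of (tgt (brk xs)) - face_sum even xs \<in> lam_gen (nat n) (m - 1)"
    using lam_gen_src_tgt_brk[OF _ assms(4)] assms(2,3) by simp
  moreover have "face_sum P xs = (\<Sum>j\<in>{j. j \<le> m \<and> P j}. cls (brk (face j xs)))" for P
    unfolding face_sum_def cls_def assms(3) less_Suc_eq_le ..
  ultimately show ?thesis
    unfolding lam_eq_def cls_def by (auto intro: lam_gen_subset_lam_rel)
qed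

end
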